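(* Let $k$ be an algebraically closed field of characteristic zero, let $\mathbb{T}^2=\operatorname{Spec}k[x^{\pm1},y^{\pm1}]$ and $\omega=\frac{dx}{x}\wedge\frac{dy}{y}$. Then: (1) the Lie subalgebra of $\mathrm{Vec}(\mathbb{T}^2)$ generated by all locally nilpotent vector fields is zero, and so is the one generated by the Hamiltonian locally nilpotent vector fields; (2) $\mathcal{H}_\omega(\mathbb{T}^2)$ is a proper Lie ideal of codimension $2$ of $\mathrm{VP}_\omega(\mathbb{T}^2)$; (3) $\mathcal{E}_\omega(\mathbb{T}^2)=[\mathcal{H}_\omega(\mathbb{T}^2),\mathcal{H}_\omega(\mathbb{T}^2)]=\mathcal{H}_\omega(\mathbb{T}^2)$, and this is a simple Lie algebra of bracket width one.
   Context: For a smooth affine surface $S$ with nowhere vanishing $2$-form $\omega$: $\mathrm{Div}_\omega\xi\in\mathcal{O}(S)$ is defined by $d(i_\xi\omega)=(\mathrm{Div}_\omega\xi)\omega$; $\mathrm{VP}_\omega(S)=\{\xi\in\mathrm{Vec}(S):\mathrm{Div}_\omega\xi=0\}$ (symplectic vector fields, i.e. $i_\xi\omega$ closed). For $f\in\mathcal{O}(S)$, $\theta_f$ is the unique vector field with $i_{\theta_f}\omega=df$; $\mathcal{H}_\omega(S)=\{\theta_f: f\in\mathcal{O}(S)\}$ (Hamiltonian vector fields, i.e. those $\xi$ with $i_\xi\omega$ exact). $E_\omega(S)=\mathrm{Div}_\omega(\mathrm{Vec}(S))\subseteq\mathcal{O}(S)$ and $\mathcal{E}_\omega(S)=\{\theta_f: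 f\in E_\omega(S)\}$. A vector field is locally nilpotent if the corresponding derivation $\partial$ of $\mathcal{O}(S)$ satisfies: for every $f$ some power $\partial^s f=0$. The bracket width of a Lie algebra $L$ is the supremum over $a\in[L,L]$ of the smallest number of brackets of elements of $L$ summing to $a$. *)

theory Defs
  imports "HOL-Computational_Algebra.Polynomial" "HOL-Library.Poly_Mapping"
    "HOL-Library.Product_Plus" "HOL-Library.Extended_Nat"
begin

text \<open>Coordinate ring of the torus: Laurent polynomials k[x^{+-1},y^{+-1}],
  as finitely supported functions from exponent pairs (i,j) in Z x Z to k
  (the monomial x^i y^j), with convolution product.\<close>
type_synonym 'k laurent = "(int \<times> int) \<Rightarrow>\<^sub>0 'k"

definition cst :: "'k::comm_ring_1 \<Rightarrow> 'k laurent" where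
  "cst c = Poly_Mapping.single (0,0) c"

definition X :: "'k::comm_ring_1 laurent" where "X = Poly_Mapping.single (1,0) 1"
definition Y :: "'k::comm_ring_1 laurent" where "Y = Poly_Mapping.single (0,1) 1"
definition Xinv :: "'k::comm_ring_1 laurent" where "Xinv = Poly_Mapping.single (-1,0) 1"
definition Yinv :: "'k::comm_ring_1 laurent" where "Yinv = Poly_Mapping.single (0,-1) 1"

text \<open>Vector fields on an affine variety = k-derivations of its coordinate ring.\<close>
definition is_derivation :: "('k::comm_ring_1 laurent \<Rightarrow> 'k laurent) \<Rightarrow> bool" where
  "is_derivation D \<longleftrightarrow>
     (\<forall>f g. D (f + g) = D f + D g) \<and>
     (\<forall>c f. D (cst c * f) = cst c * D f) \<and>
     (\<forall>f g. D (f * g) = f * D g + g * D f)"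

definition Vec :: "('k::comm_ring_1 laurent \<Rightarrow> 'k laurent) set" where
  "Vec = {D. is_derivation D}"

definition lie :: "('k::comm_ring_1 laurent \<Rightarrow> 'k laurent) \<Rightarrow> ('k laurent \<Rightarrow> 'k laurent) \<Rightarrow> ('k laurent \<Rightarrow> 'k laurent)" where
  "lie D E = (\<lambda>f. D (E f) - E (D f))"

definition zerovf :: "'k::comm_ring_1 laurent \<Rightarrow> 'k laurent" where
  "zerovf = (\<lambda>f. 0)"

definition locally_nilpotent :: "('k::comm_ring_1 laurent \<Rightarrow> 'k laurent) \<Rightarrow> bool" where
  "locally_nilpotent D \<longleftrightarrow> (\<forall>f. \<exists>s. (D ^^ s) f = 0)"

text \<open>The Euler derivations x d/dx and y d/dy.\<close>
definition delta1 :: "'k::comm_ring_1 laurent \<Rightarrow> 'k laurent" where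
  "delta1 f = Poly_Mapping.mapp (\<lambda>(i,j) c. of_int i * c) f"
definition delta2 :: "'k::comm_ring_1 laurent \<Rightarrow> 'k laurent" where
  "delta2 f = Poly_Mapping.mapp (\<lambda>(i,j) c. of_int j * c) f"

text \<open>omega = dx/x wedge dy/y.  Writing xi = a x d/dx + b y d/dy (a = xi(x)/x, b = xi(y)/y),
  i_xi omega = a dy/y - b dx/x, hence d(i_xi omega) = (x a_x + y b_y) omega.\<close>
definition Div :: "('k::comm_ring_1 laurent \<Rightarrow> 'k laurent) \<Rightarrow> 'k laurent" where
  "Div xi = delta1 (xi X * Xinv) + delta2 (xi Y * Yinv)"

text \<open>theta_f with i_{theta_f} omega = df, i.e. theta_f = f_y' x d/dx - f_x' y d/dy
  where f_x' = x df/dx, f_y' = y df/dy.\<close>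
definition theta :: "'k::comm_ring_1 laurent \<Rightarrow> ('k laurent \<Rightarrow> 'k laurent)" where
  "theta f = (\<lambda>g. delta2 f * delta1 g - delta1 f * delta2 g)"

definition VP :: "('k::comm_ring_1 laurent \<Rightarrow> 'k laurent) set" where
  "VP = {xi \<in> Vec. Div xi = 0}"

definition Ham :: "('k::comm_ring_1 laurent \<Rightarrow> 'k laurent) set" where
  "Ham = theta ` UNIV"

definition Eom :: "('k::comm_ring_1 laurent \<Rightarrow> 'k laurent) set" where
  "Eom = theta ` (Div ` Vec)"

definition vsubspace :: "('k::comm_ring_1 laurent \<Rightarrow> 'k laurent) set \<Rightarrow> bool" where
  "vsubspace S \<longleftrightarrow> zerovf \<in> S \<and> (\<forall>a\<in>S. \<forall>b\<in>S. (\<lambda>f. a f + b f) \<in> S) \<and>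
     (\<forall>c. \<forall>a\<in>S. (\<lambda>f. cst c * a f) \<in> S)"

definition lie_subalgebra :: "('k::comm_ring_1 laurent \<Rightarrow> 'k laurent) set \<Rightarrow> bool" where
  "lie_subalgebra S \<longleftrightarrow> vsubspace S \<and> (\<forall>a\<in>S. \<forall>b\<in>S. lie a b \<in> S)"

definition lie_generated :: "('k::comm_ring_1 laurent \<Rightarrow> 'k laurent) set \<Rightarrow> ('k laurent \<Rightarrow> 'k laurent) set" where
  "lie_generated S = \<Inter>{T. lie_subalgebra T \<and> S \<subseteq> T}"

definition lie_ideal :: "('k::comm_ring_1 laurent \<Rightarrow> 'k laurent) set \<Rightarrow> ('k laurent \<Rightarrow> 'k laurent) set \<Rightarrow> bool" where
  "lie_ideal I L \<longleftrightarrow> I \<subseteq> L \<and> vsubspace I \<and> (\<forall>a\<in>L. \<forall>b\<in>I. lie a b \<in> I)"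

definition bracket_span :: "('k::comm_ring_1 laurent \<Rightarrow> 'k laurent) set \<Rightarrow> ('k laurent \<Rightarrow> 'k laurent) set \<Rightarrow> ('k laurent \<Rightarrow> 'k laurent) set" where
  "bracket_span A B = \<Inter>{T. vsubspace T \<and> {lie a b |a b. a \<in> A \<and> b \<in> B} \<subseteq> T}"

definition codim_in :: "('k::comm_ring_1 laurent \<Rightarrow> 'k laurent) set \<Rightarrow> ('k laurent \<Rightarrow> 'k laurent) set \<Rightarrow> nat \<Rightarrow> bool" where
  "codim_in I L n \<longleftrightarrow> (\<exists>v::nat \<Rightarrow> ('k laurent \<Rightarrow> 'k laurent). (\<forall>i<n. v i \<in> L) \<and>
     (\<forall>xi\<in>L. \<exists>!c::nat \<Rightarrow> 'k. (\<forall>i\<ge>n. c i = 0) \<and>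
        (\<lambda>f. xi f - (\<Sum>i<n. cst (c i) * v i f)) \<in> I))"

definition simple_lie :: "('k::comm_ring_1 laurent \<Rightarrow> 'k laurent) set \<Rightarrow> bool" where
  "simple_lie L \<longleftrightarrow> lie_subalgebra L \<and> (\<exists>a\<in>L. \<exists>b\<in>L. lie a b \<noteq> zerovf) \<and>
     (\<forall>I. lie_ideal I L \<longrightarrow> I = {zerovf} \<or> I = L)"

definition nbrackets :: "('k::comm_ring_1 laurent \<Rightarrow> 'k laurent) set \<Rightarrow> ('k laurent \<Rightarrow> 'k laurent) \<Rightarrow> nat" where
  "nbrackets L a = (LEAST n. \<exists>u v :: nat \<Rightarrow> ('k laurent \<Rightarrow> 'k laurent).
      (\<forall>i<n. u i \<in> L \<and> v i \<in> L) \<and> a = (\<lambda>f. \<Sum>i<n. lie (u i) (v i) f))"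

definition bracket_width :: "('k::comm_ring_1 laurent \<Rightarrow> 'k laurent) set \<Rightarrow> enat" where
  "bracket_width L = (SUP a \<in> bracket_span L L. enat (nbrackets L a))"

end

theory Submission
  imports Defs "HOL-Library.Product_Lexorder"
begin

text \<open>
  A locally nilpotent derivation kills the units \<open>x\<close> and \<open>y\<close>, hence vanishes.
  Every vector field is \<open>a \<delta>\<^sub>1 + b \<delta>\<^sub>2\<close> with \<open>a = \<xi>(x)/x\<close>, \<open>b = \<xi>(y)/y\<close>, and it is
  symplectic iff \<open>\<delta>\<^sub>1 a + \<delta>\<^sub>2 b = 0\<close>. Since \<open>\<delta>\<^sub>1\<^sup>2 + \<delta>\<^sub>2\<^sup>2\<close> multiplies \<open>x\<^sup>iy\<^sup>j\<close> by
  \<open>i\<^sup>2 + j\<^sup>2\<close>, it is invertible on functions without constant term; this shows both that a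
  symplectic field is \<open>c\<^sub>1 \<delta>\<^sub>1 + c\<^sub>2 \<delta>\<^sub>2 + \<theta>\<^sub>f\<close> with unique constants and that \<open>Div\<close> is onto the
  functions without constant term.

  On monomials \<open>[\<theta>(x\<^sup>a), \<theta>(x\<^sup>b)] = {a,b} \<theta>(x\<^sup>a\<^sup>+\<^sup>b)\<close> for the bilinear form
  \<open>{a,b} = a\<^sub>2 b\<^sub>1 - a\<^sub>1 b\<^sub>2\<close> on \<open>\<int>\<^sup>2\<close>. So \<open>\<theta>\<^sub>h = [\<theta>(x\<^sup>a), \<theta>\<^sub>w]\<close> is solvable for \<open>w\<close> as soon as
  \<open>{a,k} \<noteq> 0\<close> on the support of \<open>h\<close>, which a suitable \<open>a\<close> achieves; and a nonzero ideal
  contains some \<open>\<theta>(x\<^sup>t)\<close> with \<open>t \<noteq> 0\<close>, from which brackets reach every monomial.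
\<close>

text \<open>With the lexicographic order \<open>\<int> \<times> \<int>\<close> is a totally ordered group, so the Laurent
  polynomials over a field form an integral domain.\<close>

instance prod :: (ordered_cancel_ab_semigroup_add, ordered_cancel_ab_semigroup_add)
  ordered_cancel_ab_semigroup_add
proof
  fix a b c :: "'a \<times> 'b"
  assume "a \<le> b"
  then show "c + a \<le> c + b"
    by (cases a; cases b; cases c) (auto simp: add_strict_left_mono add_left_mono)
qed

instance prod :: (ordered_cancel_comm_monoid_add, ordered_cancel_comm_monoid_add)
  ordered_cancel_comm_monoid_add ..

abbreviation coef :: "'k::comm_ring_1 laurent \<Rightarrow> int \<times> int \<Rightarrow> 'k" where
  "coef \<equiv> Poly_Mapping.lookup"

definition mon :: "int \<times> int \<Rightarrow> 'k::comm_ring_1 laurent" where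
  "mon a = Poly_Mapping.single a 1"

definition scale_coeffs :: "(int \<times> int \<Rightarrow> 'k) \<Rightarrow> 'k::comm_ring_1 laurent \<Rightarrow> 'k laurent" where
  "scale_coeffs w f = Poly_Mapping.mapp (\<lambda>k c. w k * c) f"

definition poisson :: "int \<times> int \<Rightarrow> int \<times> int \<Rightarrow> int" where
  "poisson a b = snd a * fst b - fst a * snd b"

lemma poisson_antisym: "poisson a b = - poisson b a"
  by (simp add: poisson_def)

lemma laurent_eq_sum_single:
  fixes f :: "'k::comm_ring_1 laurent"
  shows "f = (\<Sum>k\<in>Poly_Mapping.keys f. Poly_Mapping.single k (coef f k))"
  by (rule poly_mapping_eqI) (simp add: lookup_sum lookup_single when_def in_keys_iff)

lemma laurent_induct [case_names zero add]:
  fixes f :: "'k::comm_ring_1 laurent"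
  assumes "P 0" and "\<And>k c f. P f \<Longrightarrow> P (Poly_Mapping.single k c + f)"
  shows "P f"
proof -
  have "P (\<Sum>k\<in>S. Poly_Mapping.single k (coef f k))" if "finite S" for S
    using that by (induct S rule: finite_induct) (simp_all add: assms)
  then show ?thesis
    by (subst laurent_eq_sum_single) simp
qed

lemma coef_single_mult:
  "coef (Poly_Mapping.single a c * f) k = c * coef f (k - a)"
proof (induct f rule: laurent_induct)
  case zero
  then show ?case by simp
next
  case (add m d f)
  have "coef (Poly_Mapping.single a c * Poly_Mapping.single m d) k
      = c * coef (Poly_Mapping.single m d) (k - a)"
    by (auto simp: mult_single lookup_single when_def algebra_simps)
  then show ?case
    using add by (simp add: distrib_left lookup_add)
qed

lemma coef_mult_single: "coef (f * Poly_Mapping.single a c) k = c * coef f (k - a)"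
  by (subst mult.commute) (rule coef_single_mult)

lemma cst_eq_single: "cst c = Poly_Mapping.single 0 c"
  by (simp add: cst_def zero_prod_def)

lemma coef_cst: "coef (cst c) k = (if k = 0 then c else 0)"
  by (simp add: cst_eq_single lookup_single)

lemma coef_cst_mult [simp]: "coef (cst c * f) k = c * coef f k"
  by (simp add: cst_eq_single coef_single_mult)

lemma cst_1: "cst 1 = 1"
  by (simp add: cst_eq_single)

lemma cst_mult_cst: "cst a * cst b = cst (a * b)"
  by (simp add: cst_eq_single mult_single)

lemma coef_mon: "coef (mon a) k = (if k = a then 1 else 0)"
  by (simp add: mon_def lookup_single)

lemma coef_mon_mult [simp]: "coef (mon a * f) k = coef f (k - a)"
  by (simp add: mon_def coef_single_mult)

lemma mon_mult: "mon a * mon b = mon (a + b)"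
  by (simp add: mon_def mult_single)

lemma mon_0: "mon 0 = 1"
  by (simp add: mon_def)

lemma single_eq_cst_mult_mon: "Poly_Mapping.single a c = cst c * mon a"
  by (rule poly_mapping_eqI) (simp add: lookup_single coef_mon when_def)

lemma X_Y_eq_mon: "X = mon (1, 0)" "Y = mon (0, 1)" "Xinv = mon (-1, 0)" "Yinv = mon (0, -1)"
  by (simp_all add: X_def Y_def Xinv_def Yinv_def mon_def)

lemma X_mult_Xinv: "X * Xinv = 1" "Xinv * X = 1"
  and Y_mult_Yinv: "Y * Yinv = 1" "Yinv * Y = 1"
  by (simp_all add: X_Y_eq_mon mon_mult zero_prod_def flip: mon_0)

lemma coef_scale_coeffs [simp]: "coef (scale_coeffs w f) k = w k * coef f k"
  by (simp add: scale_coeffs_def lookup_mapp when_def in_keys_iff)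

lemma scale_coeffs_0 [simp]: "scale_coeffs w 0 = 0"
  by (rule poly_mapping_eqI) simp

lemma scale_coeffs_add: "scale_coeffs w (f + g) = scale_coeffs w f + scale_coeffs w g"
  by (rule poly_mapping_eqI) (simp add: lookup_add algebra_simps)

lemma scale_coeffs_scale_coeffs:
  "scale_coeffs v (scale_coeffs w f) = scale_coeffs (\<lambda>k. v k * w k) f"
  by (rule poly_mapping_eqI) (simp add: mult.assoc)

lemma scale_coeffs_inverse:
  fixes h :: "'k::field laurent"
  assumes "\<And>k. k \<in> Poly_Mapping.keys h \<Longrightarrow> w k \<noteq> 0"
  shows "scale_coeffs w (scale_coeffs (\<lambda>k. inverse (w k)) h) = h"
proof (rule poly_mapping_eqI)
  fix k
  show "coef (scale_coeffs w (scale_coeffs (\<lambda>k. inverse (w k)) h)) k = coef h k"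
    using assms[of k] by (cases "coef h k = 0") (auto simp: in_keys_iff)
qed

lemma scale_coeffs_single: "scale_coeffs w (Poly_Mapping.single a c) = Poly_Mapping.single a (w a * c)"
  by (rule poly_mapping_eqI) (simp add: lookup_single when_def)

lemma scale_coeffs_mult:
  assumes additive: "\<And>a b. w (a + b) = w a + w b"
  shows "scale_coeffs w (f * g) = f * scale_coeffs w g + g * scale_coeffs w f"
proof (induct f rule: laurent_induct)
  case zero
  then show ?case by simp
next
  case (add a c f)
  have "scale_coeffs w (Poly_Mapping.single a c * g)
      = Poly_Mapping.single a c * scale_coeffs w g + g * scale_coeffs w (Poly_Mapping.single a c)"
  proof (rule poly_mapping_eqI)
    fix k
    have "w k = w (k - a) + w a"
      using additive[of "k - a" a] by simp
    then show "coef (scale_coeffs w (Poly_Mapping.single a c * g)) k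
        = coef (Poly_Mapping.single a c * scale_coeffs w g
            + g * scale_coeffs w (Poly_Mapping.single a c)) k"
      by (simp add: coef_single_mult coef_mult_single scale_coeffs_single lookup_add algebra_simps)
  qed
  then show ?case
    using add by (simp add: scale_coeffs_add algebra_simps)
qed

lemma delta_eq_scale_coeffs:
  "delta1 = scale_coeffs (\<lambda>k. of_int (fst k))" "delta2 = scale_coeffs (\<lambda>k. of_int (snd k))"
  by (auto intro!: ext poly_mapping_eqI
      simp: delta1_def delta2_def lookup_mapp when_def in_keys_iff split: prod.splits)

lemma coef_delta [simp]:
  "coef (delta1 f) k = of_int (fst k) * coef f k" "coef (delta2 f) k = of_int (snd k) * coef f k"
  by (simp_all add: delta_eq_scale_coeffs)

lemma delta_add [simp]:
  "delta1 (f + g) = delta1 f + delta1 g" "delta2 (f + g) = delta2 f + delta2 g"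
  by (simp_all add: delta_eq_scale_coeffs scale_coeffs_add)

lemma delta_diff [simp]:
  "delta1 (f - g) = delta1 f - delta1 g" "delta2 (f - g) = delta2 f - delta2 g"
  by (rule poly_mapping_eqI; simp add: lookup_minus algebra_simps)+

lemma delta_uminus [simp]: "delta1 (- f) = - delta1 f" "delta2 (- f) = - delta2 f"
  by (rule poly_mapping_eqI; simp)+

lemma delta_0 [simp]: "delta1 0 = 0" "delta2 0 = 0"
  by (rule poly_mapping_eqI; simp)+

lemma delta_cst [simp]: "delta1 (cst c) = 0" "delta2 (cst c) = 0"
  by (rule poly_mapping_eqI; simp add: coef_cst)+

lemma delta_1 [simp]: "delta1 1 = 0" "delta2 1 = 0"
  using delta_cst[of 1] by (simp_all add: cst_1)

lemma delta_cst_mult [simp]: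
  "delta1 (cst c * f) = cst c * delta1 f" "delta2 (cst c * f) = cst c * delta2 f"
  by (rule poly_mapping_eqI; simp add: mult.left_commute)+

lemma delta_mult [simp]:
  "delta1 (f * g) = f * delta1 g + g * delta1 f" "delta2 (f * g) = f * delta2 g + g * delta2 f"
  by (simp_all add: delta_eq_scale_coeffs scale_coeffs_mult)

lemma delta1_delta2: "delta1 (delta2 f) = delta2 (delta1 f)"
  by (rule poly_mapping_eqI) (simp add: algebra_simps)

lemma delta_mon: "delta1 (mon a) = cst (of_int (fst a)) * mon a" "delta2 (mon a) = cst (of_int (snd a)) * mon a"
  by (rule poly_mapping_eqI; simp add: coef_mon)+

lemma delta_X_Y [simp]: "delta1 X = X" "delta2 X = 0" "delta1 Y = 0" "delta2 Y = Y"
  by (rule poly_mapping_eqI; simp add: X_Y_eq_mon coef_mon)+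

context
  fixes D :: "'k::comm_ring_1 laurent \<Rightarrow> 'k laurent"
  assumes D: "is_derivation D"
begin

lemma derivation_add: "D (f + g) = D f + D g"
  using D unfolding is_derivation_def by blast

lemma derivation_cst_mult: "D (cst c * f) = cst c * D f"
  using D unfolding is_derivation_def by blast

lemma derivation_mult: "D (f * g) = f * D g + g * D f"
  using D unfolding is_derivation_def by blast

lemma derivation_0: "D 0 = 0"
  using derivation_add[of 0 0] by simp

lemma derivation_1: "D 1 = 0"
  using derivation_mult[of 1 1] by simp

lemma derivation_cst: "D (cst c) = 0"
  using derivation_cst_mult[of c 1] by (simp add: derivation_1)

lemma derivation_sum: "D (sum h S) = (\<Sum>i\<in>S. D (h i))"
  by (induct S rule: infinite_finite_induct) (simp_all add: derivation_0 derivation_add)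

lemma derivation_of_nat: "D (of_nat n) = 0"
  by (induct n) (simp_all add: derivation_0 derivation_add derivation_1)

lemma funpow_derivation_0: "(D ^^ n) 0 = 0"
  by (induct n) (simp_all add: derivation_0)

lemma funpow_derivation_1: "(D ^^ Suc n) 1 = 0"
  by (induct n) (simp_all add: derivation_0 derivation_1)

lemma derivation_inverse_eq_0:
  assumes "u * v = 1" "D u = 0"
  shows "D v = 0"
proof -
  have "v * (u * D v) = 0"
    using derivation_mult[of u v] assms by (simp add: derivation_1)
  then show ?thesis
    using assms(1) by (simp add: mult.assoc[symmetric] mult.commute)
qed

lemma derivation_mon_eq_0:
  assumes "D X = 0" "D Y = 0"
  shows "D (mon a) = 0"
proof -
  have step: "D (mon (b + e)) = 0" if "D (mon b) = 0" "D (mon e) = 0" for b e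
    using that by (simp flip: mon_mult add: derivation_mult)
  have gens: "D (mon (1, 0)) = 0" "D (mon (-1, 0)) = 0" "D (mon (0, 1)) = 0" "D (mon (0, -1)) = 0"
    using assms derivation_inverse_eq_0 X_mult_Xinv Y_mult_Yinv by (auto simp: X_Y_eq_mon)
  have base: "D (mon 0) = 0"
    by (simp add: mon_0 derivation_1)
  have "D (mon (i, 0)) = 0" for i
  proof (induct i rule: int_induct[where k = 0])
    case (step1 i)
    then show ?case using step[OF _ gens(1), of "(i, 0)"] by simp
  next
    case (step2 i)
    then show ?case using step[OF _ gens(2), of "(i, 0)"] by simp
  qed (use base in \<open>simp add: zero_prod_def\<close>)
  moreover have "D (mon (0, j)) = 0" for j
  proof (induct j rule: int_induct[where k = 0])
    case (step1 j)
    then show ?case using step[OF _ gens(3), of "(0, j)"] by simp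
  next
    case (step2 j)
    then show ?case using step[OF _ gens(4), of "(0, j)"] by simp
  qed (use base in \<open>simp add: zero_prod_def\<close>)
  ultimately show ?thesis
    using step[of "(fst a, 0)" "(0, snd a)"] by simp
qed

lemma derivation_eq_0_if_X_Y:
  assumes "D X = 0" "D Y = 0"
  shows "D f = 0"
  by (induct f rule: laurent_induct)
    (simp_all add: derivation_0 derivation_add single_eq_cst_mult_mon derivation_cst_mult
      derivation_mon_eq_0[OF assms])

lemma derivation_leibniz:
  "(D ^^ n) (f * g) = (\<Sum>i\<le>n. of_nat (n choose i) * (D ^^ i) f * (D ^^ (n - i)) g)"
proof (induct n)
  case 0
  then show ?case by simp
next
  case (Suc n)
  define F where "F i = (D ^^ i) f" for i
  define G where "G i = (D ^^ i) g" for i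
  have D_F: "D (F i) = F (Suc i)" and D_G: "D (G i) = G (Suc i)" for i
    by (simp_all add: F_def G_def)
  have D_scaled: "D (of_nat m * h) = of_nat m * D h" for m h
    by (simp add: derivation_mult derivation_of_nat)
  have "(D ^^ Suc n) (f * g) = D (\<Sum>i\<le>n. of_nat (n choose i) * F i * G (n - i))"
    using Suc by (simp add: F_def G_def)
  also have "\<dots> = (\<Sum>i\<le>n. of_nat (n choose i) * (F i * G (Suc (n - i)) + G (n - i) * F (Suc i)))"
    by (simp add: derivation_sum mult.assoc D_scaled derivation_mult derivation_of_nat D_F D_G)
  also have "\<dots> = (\<Sum>i\<le>n. of_nat (n choose i) * F (Suc i) * G (n - i))
      + (\<Sum>i\<le>n. of_nat (n choose i) * F i * G (Suc (n - i)))"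
    by (simp only: sum.distrib[symmetric]) (rule sum.cong, simp, simp add: algebra_simps)
  also have "(\<Sum>i\<le>n. of_nat (n choose i) * F i * G (Suc (n - i)))
      = (\<Sum>i\<le>Suc n. of_nat (n choose i) * F i * G (Suc n - i))"
    by (simp add: Suc_diff_le binomial_eq_0)
  also have "\<dots> = F 0 * G (Suc n) + (\<Sum>i\<le>n. of_nat (n choose Suc i) * F (Suc i) * G (n - i))"
    by (subst sum.atMost_Suc_shift) simp
  also have "(\<Sum>i\<le>n. of_nat (n choose i) * F (Suc i) * G (n - i)) + \<dots>
      = F 0 * G (Suc n) + (\<Sum>i\<le>n. of_nat (Suc n choose Suc i) * F (Suc i) * G (n - i))"
    by (simp add: sum.distrib[symmetric] distrib_right)
  also have "\<dots> = (\<Sum>i\<le>Suc n. of_nat (Suc n choose i) * F i * G (Suc n - i))"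
    by (subst sum.atMost_Suc_shift) simp
  finally show ?case
    by (simp add: F_def G_def)
qed

lemma funpow_derivation_eq_0_beyond:
  assumes "(D ^^ Suc p) u = 0" "p < n"
  shows "(D ^^ n) u = 0"
proof -
  have "n = (n - Suc p) + Suc p"
    using assms(2) by simp
  then have "(D ^^ n) u = (D ^^ (n - Suc p)) ((D ^^ Suc p) u)"
    by (metis funpow_add comp_apply)
  then show ?thesis
    using assms(1) by (simp add: funpow_derivation_0)
qed

end

lemma funpow_last_nonzero:
  fixes D :: "'a::zero \<Rightarrow> 'a"
  assumes "(D ^^ s) u = 0" "u \<noteq> 0"
  obtains p where "(D ^^ p) u \<noteq> 0" "(D ^^ Suc p) u = 0"
  using assms
proof (induct s)
  case (Suc s)
  then show ?case by (cases "(D ^^ s) u = 0") auto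
qed simp

text \<open>If \<open>p\<close>, \<open>q\<close> are the last exponents with \<open>D\<^sup>p u \<noteq> 0\<close>, \<open>D\<^sup>q v \<noteq> 0\<close>, the only surviving
  Leibniz term of \<open>D\<^sup>p\<^sup>+\<^sup>q (u v)\<close> is \<open>binom(p+q,p) D\<^sup>p u D\<^sup>q v \<noteq> 0\<close>, whereas \<open>D\<^sup>p\<^sup>+\<^sup>q 1 = 0\<close>
  unless \<open>p = q = 0\<close>.\<close>
lemma locally_nilpotent_derivation_unit_eq_0:
  fixes D :: "'k::field_char_0 laurent \<Rightarrow> 'k laurent"
  assumes D: "is_derivation D" and nil: "locally_nilpotent D" and uv: "u * v = 1"
  shows "D u = 0"
proof (rule ccontr)
  assume Du: "D u \<noteq> 0"
  have "u \<noteq> 0" "v \<noteq> 0"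
    using uv by auto
  moreover obtain su sv where "(D ^^ su) u = 0" "(D ^^ sv) v = 0"
    using nil unfolding locally_nilpotent_def by blast
  ultimately obtain p q where p: "(D ^^ p) u \<noteq> 0" "(D ^^ Suc p) u = 0"
    and q: "(D ^^ q) v \<noteq> 0" "(D ^^ Suc q) v = 0"
    by (metis funpow_last_nonzero)
  have "p \<noteq> 0"
    using Du p(2) by (cases p) auto
  have "(D ^^ (p + q)) (u * v) = of_nat ((p + q) choose p) * (D ^^ p) u * (D ^^ q) v"
  proof -
    let ?t = "\<lambda>i. of_nat ((p + q) choose i) * (D ^^ i) u * (D ^^ (p + q - i)) v"
    have "?t i = 0" if "i \<in> {..p + q} - {p}" for i
      using that funpow_derivation_eq_0_beyond[OF D p(2)] funpow_derivation_eq_0_beyond[OF D q(2)]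
      by (cases "p < i") auto
    then have "(\<Sum>i\<in>{..p + q} - {p}. ?t i) = 0"
      by (intro sum.neutral) blast
    then have "(\<Sum>i\<le>p + q. ?t i) = ?t p"
      by (subst sum.remove[of _ p]) auto
    then show ?thesis
      by (simp add: derivation_leibniz[OF D])
  qed
  moreover have "(D ^^ (p + q)) (u * v) = 0"
    using \<open>p \<noteq> 0\<close> uv funpow_derivation_1[OF D, of "p + q - 1"] by simp
  ultimately show False
    using p(1) q(1) by simp
qed

lemma locally_nilpotent_derivation_eq_zerovf:
  fixes D :: "'k::field_char_0 laurent \<Rightarrow> 'k laurent"
  assumes D: "is_derivation D" and "locally_nilpotent D"
  shows "D = zerovf"
proof
  fix f
  have "D X = 0" "D Y = 0"
    using locally_nilpotent_derivation_unit_eq_0[OF assms] X_mult_Xinv Y_mult_Yinv by blast+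
  then show "D f = zerovf f"
    by (simp add: derivation_eq_0_if_X_Y[OF D] zerovf_def)
qed

lemma lie_generated_eq_zerovf:
  assumes "S \<subseteq> {zerovf}"
  shows "lie_generated S = {zerovf}"
proof -
  have "lie_subalgebra {zerovf}"
    by (simp add: lie_subalgebra_def vsubspace_def lie_def zerovf_def)
  then have "lie_generated S \<subseteq> {zerovf}"
    unfolding lie_generated_def using assms by blast
  moreover have "zerovf \<in> lie_generated S"
    unfolding lie_generated_def lie_subalgebra_def vsubspace_def by blast
  ultimately show ?thesis
    by blast
qed

lemma is_derivation_euler: "is_derivation (\<lambda>g. a * delta1 g + b * delta2 g)"
  unfolding is_derivation_def by (simp add: algebra_simps)

lemma is_derivation_diff:
  assumes "is_derivation D" "is_derivation E"
  shows "is_derivation (\<lambda>g. D g - E g)"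
  unfolding is_derivation_def
  by (simp add: assms[THEN derivation_add] assms[THEN derivation_mult] assms[THEN derivation_cst]
      assms[THEN derivation_cst_mult] algebra_simps)

lemma derivation_eq_euler:
  assumes D: "is_derivation D"
  shows "D g = (D X * Xinv) * delta1 g + (D Y * Yinv) * delta2 g"
proof -
  let ?E = "\<lambda>g. D g - ((D X * Xinv) * delta1 g + (D Y * Yinv) * delta2 g)"
  have "?E X = 0" "?E Y = 0"
    by (simp_all add: X_mult_Xinv Y_mult_Yinv mult.assoc)
  then have "?E g = 0"
    using derivation_eq_0_if_X_Y[OF is_derivation_diff[OF D is_derivation_euler]] by blast
  then show ?thesis
    by simp
qed

lemma theta_add: "theta (f + g) = (\<lambda>h. theta f h + theta g h)"
  and theta_diff: "theta (f - g) = (\<lambda>h. theta f h - theta g h)"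
  and theta_cst_mult: "theta (cst c * f) = (\<lambda>h. cst c * theta f h)"
  and theta_cst: "theta (cst c) = zerovf"
  by (auto simp: theta_def zerovf_def algebra_simps)

lemma theta_minus_constant_term: "theta (f - cst (coef f 0)) = theta f"
  by (simp add: theta_diff theta_cst zerovf_def)

lemma theta_X_Y: "theta f X = delta2 f * X" "theta f Y = - (delta1 f * Y)"
  by (simp_all add: theta_def)

lemma is_derivation_theta: "is_derivation (theta f)"
  unfolding is_derivation_def theta_def by (simp add: algebra_simps)

lemma Div_theta: "Div (theta f) = 0"
  by (simp add: Div_def theta_X_Y mult.assoc X_mult_Xinv Y_mult_Yinv delta1_delta2)

lemma lie_symplectic_theta:
  assumes xi: "is_derivation xi" and "Div xi = 0"
  shows "lie xi (theta f) = theta (xi f)"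
proof
  fix g
  define a where "a = xi X * Xinv"
  define b where "b = xi Y * Yinv"
  have xi_eq: "xi h = a * delta1 h + b * delta2 h" for h
    unfolding a_def b_def by (rule derivation_eq_euler[OF xi])
  have "delta1 a + delta2 b = 0"
    using \<open>Div xi = 0\<close> unfolding Div_def a_def b_def .
  then have "delta2 b = - delta1 a"
    by (simp add: eq_neg_iff_add_eq_0 add.commute)
  then show "lie xi (theta f) g = theta (xi f) g"
    unfolding lie_def theta_def xi_eq by (simp add: delta1_delta2 algebra_simps)
qed

lemma lie_theta_theta: "lie (theta f) (theta g) = theta (theta f g)"
  by (rule lie_symplectic_theta[OF is_derivation_theta Div_theta])

lemma theta_in_Ham [simp]: "theta f \<in> Ham"
  by (simp add: Ham_def)

lemma HamE [elim!]:
  assumes "xi \<in> Ham"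
  obtains f where "xi = theta f"
  using assms by (auto simp: Ham_def)

lemma mem_VP_iff: "xi \<in> VP \<longleftrightarrow> is_derivation xi \<and> Div xi = 0"
  by (simp add: VP_def Vec_def)

lemma Ham_subset_VP: "Ham \<subseteq> VP"
  by (auto simp: mem_VP_iff is_derivation_theta Div_theta)

lemma vsubspace_Ham: "vsubspace Ham"
  unfolding vsubspace_def
  by (auto simp: theta_cst[of 0, symmetric] simp flip: theta_add theta_cst_mult)

lemma lie_ideal_Ham_VP: "lie_ideal Ham VP"
  unfolding lie_ideal_def
  by (auto simp: Ham_subset_VP vsubspace_Ham mem_VP_iff lie_symplectic_theta)

lemma lie_subalgebra_Ham: "lie_subalgebra Ham"
  unfolding lie_subalgebra_def
  by (auto simp: vsubspace_Ham lie_theta_theta)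

lemma delta_in_VP: "delta1 \<in> VP" "delta2 \<in> VP"
  by (simp_all add: mem_VP_iff is_derivation_def Div_def X_mult_Xinv Y_mult_Yinv)

lemma X_Y_nonzero: "X \<noteq> 0" "Y \<noteq> 0"
  using X_mult_Xinv(1) Y_mult_Yinv(1) by (metis mult_zero_left zero_neq_one)+

lemma euler_plus_theta_unique:
  fixes f h :: "'k::field_char_0 laurent"
  assumes "\<And>g. cst c1 * delta1 g + cst c2 * delta2 g + theta f g
              = cst d1 * delta1 g + cst d2 * delta2 g + theta h g"
  shows "c1 = d1 \<and> c2 = d2"
proof -
  have "(cst c1 + delta2 f) * X = (cst d1 + delta2 h) * X"
    using assms[of X] by (simp add: theta_X_Y distrib_right)
  then have "cst c1 + delta2 f = cst d1 + delta2 h"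
    by (simp add: X_Y_nonzero)
  from arg_cong[OF this, of "\<lambda>p. coef p 0"] have "c1 = d1"
    by (simp add: lookup_add coef_cst zero_prod_def)
  have "(cst c2 - delta1 f) * Y = (cst d2 - delta1 h) * Y"
    using assms[of Y] by (simp add: theta_X_Y left_diff_distrib)
  then have "cst c2 - delta1 f = cst d2 - delta1 h"
    by (simp add: X_Y_nonzero)
  from arg_cong[OF this, of "\<lambda>p. coef p 0"] have "c2 = d2"
    by (simp add: lookup_minus coef_cst zero_prod_def)
  with \<open>c1 = d1\<close> show ?thesis ..
qed

lemma Ham_neq_VP: "(Ham :: ('k::field_char_0 laurent \<Rightarrow> 'k laurent) set) \<noteq> VP"
proof
  assume "(Ham :: ('k laurent \<Rightarrow> 'k laurent) set) = VP"
  then have "delta1 \<in> (Ham :: ('k laurent \<Rightarrow> 'k laurent) set)"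
    using delta_in_VP(1) by simp
  then obtain f :: "'k laurent" where f: "delta1 = theta f"
    by blast
  have "theta 0 = (zerovf :: 'k laurent \<Rightarrow> 'k laurent)"
    using theta_cst[of 0] by (simp add: cst_eq_single)
  then have "cst 1 * delta1 g + cst 0 * delta2 g + theta 0 g
      = cst 0 * delta1 g + cst 0 * delta2 g + theta f g" for g
    by (simp add: f cst_1 cst_eq_single zerovf_def)
  from euler_plus_theta_unique[OF this] show False
    by simp
qed

definition inverse_laplacian :: "'k::field_char_0 laurent \<Rightarrow> 'k laurent" where
  "inverse_laplacian h = scale_coeffs (\<lambda>k. inverse (of_int (fst k * fst k + snd k * snd k))) h"

lemma of_int_norm_nonzero:
  assumes "k \<noteq> 0"
  shows "(of_int (fst k) * of_int (fst k) + of_int (snd k) * of_int (snd k) :: 'k::field_char_0) \<noteq> 0"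
proof -
  have "fst k * fst k + snd k * snd k \<noteq> 0"
    using assms by (cases k) (simp add: zero_prod_def flip: power2_eq_square)
  then show ?thesis
    by (metis of_int_add of_int_eq_0_iff of_int_mult)
qed

lemma laplacian_inverse_laplacian:
  "delta1 (delta1 (inverse_laplacian h)) + delta2 (delta2 (inverse_laplacian h)) = h - cst (coef h 0)"
proof (rule poly_mapping_eqI)
  fix k :: "int \<times> int"
  show "coef (delta1 (delta1 (inverse_laplacian h)) + delta2 (delta2 (inverse_laplacian h))) k
      = coef (h - cst (coef h 0)) k"
  proof (cases "k = 0")
    case False
    then show ?thesis
      using of_int_norm_nonzero[OF False, where 'k = 'a]
      by (simp add: inverse_laplacian_def lookup_add lookup_minus coef_cst distrib_right[symmetric]
          mult.assoc[symmetric])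
  qed (simp add: inverse_laplacian_def lookup_add lookup_minus coef_cst zero_prod_def)
qed

lemma potential_coeffs:
  fixes i j a b :: "'a::field"
  assumes "i * a + j * b = 0" "i * i + j * j \<noteq> 0"
  shows "j * (inverse (i * i + j * j) * (j * a - i * b)) = a"
    and "i * (inverse (i * i + j * j) * (j * a - i * b)) = - b"
proof -
  have jb: "j * b = - (i * a)" and ia: "i * a = - (j * b)"
    using assms(1) by (simp_all add: eq_neg_iff_add_eq_0 add.commute)
  have "j * (j * a - i * b) = j * j * a - i * (j * b)"
    by (simp add: algebra_simps)
  also have "\<dots> = (i * i + j * j) * a"
    unfolding jb by (simp add: algebra_simps)
  finally have 1: "j * (j * a - i * b) = (i * i + j * j) * a" .
  have "i * (j * a - i * b) = j * (i * a) - i * i * b"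
    by (simp add: algebra_simps)
  also have "\<dots> = - ((i * i + j * j) * b)"
    unfolding ia by (simp add: algebra_simps)
  finally have 2: "i * (j * a - i * b) = - ((i * i + j * j) * b)" .
  show "j * (inverse (i * i + j * j) * (j * a - i * b)) = a"
    using 1 assms(2) by (simp add: mult.left_commute[of j])
  show "i * (inverse (i * i + j * j) * (j * a - i * b)) = - b"
    using 2 assms(2) by (simp add: mult.left_commute[of i])
qed

text \<open>Writing \<open>\<xi> = a \<delta>\<^sub>1 + b \<delta>\<^sub>2\<close>, the condition \<open>\<delta>\<^sub>1 a + \<delta>\<^sub>2 b = 0\<close> makes
  \<open>f = \<Delta>\<^sup>-\<^sup>1(\<delta>\<^sub>2 a - \<delta>\<^sub>1 b)\<close> a potential for the non-constant part of \<open>(a, b)\<close>.\<close>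
lemma symplectic_decomposition:
  fixes xi :: "'k::field_char_0 laurent \<Rightarrow> 'k laurent"
  assumes "xi \<in> VP"
  obtains c1 c2 f where "\<And>g. xi g = cst c1 * delta1 g + cst c2 * delta2 g + theta f g"
proof -
  have xi: "is_derivation xi" and "Div xi = 0"
    using assms by (simp_all add: mem_VP_iff)
  define a where "a = xi X * Xinv"
  define b where "b = xi Y * Yinv"
  have div: "delta1 a + delta2 b = 0"
    using \<open>Div xi = 0\<close> unfolding Div_def a_def b_def .
  define f where "f = inverse_laplacian (delta2 a - delta1 b)"
  have coef_div: "of_int (fst k) * coef a k + of_int (snd k) * coef b k = 0" for k
    using arg_cong[OF div, of "\<lambda>p. coef p k"] by (simp add: lookup_add)
  have "coef (delta2 f) k = coef (a - cst (coef a 0)) k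
      \<and> coef (delta1 f) k = coef (- (b - cst (coef b 0))) k" for k
  proof (cases "k = 0")
    case False
    then show ?thesis
      using potential_coeffs[OF coef_div[of k] of_int_norm_nonzero[OF False]]
      by (simp add: f_def inverse_laplacian_def lookup_minus coef_cst)
  qed (simp add: f_def inverse_laplacian_def lookup_minus coef_cst zero_prod_def)
  then have "delta2 f = a - cst (coef a 0)" "delta1 f = - (b - cst (coef b 0))"
    by (auto intro: poly_mapping_eqI)
  then have a: "a = cst (coef a 0) + delta2 f" and b: "b = cst (coef b 0) - delta1 f"
    by simp_all
  have "xi g = a * delta1 g + b * delta2 g" for g
    unfolding a_def b_def by (rule derivation_eq_euler[OF xi])
  also have "a * delta1 g + b * delta2 g
      = cst (coef a 0) * delta1 g + cst (coef b 0) * delta2 g + theta f g" for g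
    by (subst a, subst b) (simp add: theta_def algebra_simps)
  finally have "xi g = cst (coef a 0) * delta1 g + cst (coef b 0) * delta2 g + theta f g" for g .
  then show ?thesis
    using that by blast
qed

lemma codim_Ham_VP: "codim_in (Ham :: ('k::field_char_0 laurent \<Rightarrow> 'k laurent) set) VP 2"
  unfolding codim_in_def
proof (intro exI conjI allI impI ballI)
  let ?v = "\<lambda>i::nat. if i = 0 then delta1 else (delta2 :: 'k laurent \<Rightarrow> 'k laurent)"
  show "?v i \<in> VP" for i
    by (simp add: delta_in_VP)
  have sum2: "(\<Sum>i<2. cst (c i) * ?v i g) = cst (c 0) * delta1 g + cst (c 1) * delta2 g" for c g
    by (simp add: numeral_2_eq_2)
  fix xi :: "'k laurent \<Rightarrow> 'k laurent"
  assume "xi \<in> VP"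
  then obtain c1 c2 f where xi: "\<And>g. xi g = cst c1 * delta1 g + cst c2 * delta2 g + theta f g"
    using symplectic_decomposition by blast
  let ?c = "\<lambda>i::nat. if i = 0 then c1 else if i = 1 then c2 else 0"
  show "\<exists>!c. (\<forall>i\<ge>2. c i = 0) \<and> (\<lambda>g. xi g - (\<Sum>i<2. cst (c i) * ?v i g)) \<in> Ham"
  proof (rule ex1I[of _ ?c])
    have "(\<lambda>g. xi g - (cst c1 * delta1 g + cst c2 * delta2 g)) = theta f"
      by (simp add: xi)
    then show "(\<forall>i\<ge>2. ?c i = 0) \<and> (\<lambda>g. xi g - (\<Sum>i<2. cst (?c i) * ?v i g)) \<in> Ham"
      unfolding sum2 by simp
  next
    fix c
    assume c: "(\<forall>i\<ge>2. c i = 0) \<and> (\<lambda>g. xi g - (\<Sum>i<2. cst (c i) * ?v i g)) \<in> Ham"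
    then obtain h where "(\<lambda>g. xi g - (cst (c 0) * delta1 g + cst (c 1) * delta2 g)) = theta h"
      unfolding sum2 by blast
    then have "xi g = cst (c 0) * delta1 g + cst (c 1) * delta2 g + theta h g" for g
      by (drule_tac fun_cong[of _ _ g]) (simp add: diff_eq_eq add.commute)
    then have "c1 = c 0 \<and> c2 = c 1"
      by (intro euler_plus_theta_unique[of c1 c2 f "c 0" "c 1" h]) (simp flip: xi)
    then show "c = ?c"
      using c by (auto simp: fun_eq_iff)
  qed
qed

lemma Div_surjective:
  fixes h :: "'k::field_char_0 laurent"
  assumes "coef h 0 = 0"
  shows "h \<in> Div ` Vec"
proof
  define P where "P = inverse_laplacian h"
  show "(\<lambda>g. delta1 P * delta1 g + delta2 P * delta2 g) \<in> Vec"
    by (simp add: Vec_def is_derivation_euler)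
  show "h = Div (\<lambda>g. delta1 P * delta1 g + delta2 P * delta2 g)"
    using laplacian_inverse_laplacian[of h] assms
    by (simp add: Div_def P_def mult.assoc X_mult_Xinv Y_mult_Yinv cst_eq_single)
qed

lemma Eom_eq_Ham: "(Eom :: ('k::field_char_0 laurent \<Rightarrow> 'k laurent) set) = Ham"
proof
  show "Eom \<subseteq> Ham"
    by (auto simp: Eom_def)
  show "(Ham :: ('k laurent \<Rightarrow> 'k laurent) set) \<subseteq> Eom"
  proof
    fix xi :: "'k laurent \<Rightarrow> 'k laurent"
    assume "xi \<in> Ham"
    then obtain f where "xi = theta f"
      by blast
    moreover have "f - cst (coef f 0) \<in> Div ` Vec"
      by (rule Div_surjective) (simp add: lookup_minus coef_cst)
    ultimately show "xi \<in> Eom"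
      unfolding Eom_def by (metis image_eqI theta_minus_constant_term)
  qed
qed

lemma coef_theta_mon:
  "coef (theta (mon a) q) k = of_int (poisson a (k - a)) * coef q (k - a)"
proof -
  have "theta (mon a) q
      = cst (of_int (snd a)) * (mon a * delta1 q) - cst (of_int (fst a)) * (mon a * delta2 q)"
    by (simp add: theta_def delta_mon mult.assoc)
  then show ?thesis
    by (simp only: lookup_minus coef_cst_mult coef_mon_mult coef_delta)
      (simp add: poisson_def algebra_simps)
qed

lemma theta_mon_mon: "theta (mon a) (mon b) = cst (of_int (poisson a b)) * mon (a + b)"
  by (rule poly_mapping_eqI) (auto simp: coef_theta_mon coef_mon)

lemma theta_mon_mult_mon_uminus:
  "theta (mon a) (mon (- a) * q) = scale_coeffs (\<lambda>k. of_int (poisson a k)) q"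
  by (rule poly_mapping_eqI) (simp add: coef_theta_mon, simp add: poisson_def algebra_simps)

lemma theta_mon_uminus_theta_mon:
  "theta (mon (- d)) (theta (mon d) q) = scale_coeffs (\<lambda>k. - (of_int (poisson d k) ^ 2)) q"
  by (rule poly_mapping_eqI)
    (simp add: coef_theta_mon, simp add: poisson_def power2_eq_square algebra_simps)

lemma int_quadratic_nonzero:
  fixes \<alpha> \<beta> \<gamma> n :: int
  assumes "\<alpha> \<noteq> 0 \<or> \<beta> \<noteq> 0" and n: "\<bar>\<beta>\<bar> + \<bar>\<gamma>\<bar> < n"
  shows "\<alpha> * n\<^sup>2 + \<beta> * n + \<gamma> \<noteq> 0"
proof (cases "\<alpha> = 0")
  case True
  then have "\<bar>\<gamma>\<bar> < \<bar>\<beta>\<bar> * n"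
    using assms n by (smt (verit) mult_le_cancel_right1)
  then show ?thesis
    using True n by (auto simp: abs_mult)
next
  case False
  have n1: "1 \<le> n" "1 \<le> n - \<bar>\<beta>\<bar>"
    using n by auto
  have "\<bar>\<gamma>\<bar> < n"
    using n by auto
  also have "n \<le> n * (n - \<bar>\<beta>\<bar>)"
    using mult_left_mono[OF n1(2), of n] n1(1) by simp
  also have "\<dots> \<le> \<bar>\<alpha>\<bar> * n\<^sup>2 - \<bar>\<beta>\<bar> * n"
    using mult_right_mono[of 1 "\<bar>\<alpha>\<bar>" "n\<^sup>2"] False by (simp add: power2_eq_square algebra_simps)
  also have "\<dots> = \<bar>\<alpha> * n\<^sup>2\<bar> - \<bar>\<beta> * n\<bar>"
    using n1(1) by (simp add: abs_mult)
  also have "\<dots> \<le> \<bar>\<alpha> * n\<^sup>2 + \<beta> * n\<bar>"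
    by arith
  finally show ?thesis
    by auto
qed

text \<open>A finite set of conditions \<open>poisson d a \<noteq> e\<close> with \<open>d \<noteq> 0\<close> is met by \<open>a = (n, n\<^sup>2)\<close>
  for large \<open>n\<close>, since then \<open>poisson d a - e\<close> is a nonzero quadratic polynomial in \<open>n\<close>.\<close>
lemma exists_poisson_avoiding:
  assumes "finite K" "\<And>k. k \<in> K \<Longrightarrow> d k \<noteq> 0"
  obtains a where "\<And>k. k \<in> K \<Longrightarrow> poisson (d k) a \<noteq> e k"
proof
  define n where "n = 1 + (\<Sum>k\<in>K. \<bar>snd (d k)\<bar> + \<bar>e k\<bar>)"
  fix k
  assume "k \<in> K"
  have "\<bar>snd (d k)\<bar> + \<bar>e k\<bar> \<le> (\<Sum>k\<in>K. \<bar>snd (d k)\<bar> + \<bar>e k\<bar>)"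
    using \<open>k \<in> K\<close> assms(1) by (intro member_le_sum) auto
  moreover have "fst (d k) \<noteq> 0 \<or> snd (d k) \<noteq> 0"
    using assms(2)[OF \<open>k \<in> K\<close>] by (auto simp: zero_prod_def prod_eq_iff)
  ultimately have "(- fst (d k)) * n\<^sup>2 + snd (d k) * n + (- e k) \<noteq> 0"
    by (intro int_quadratic_nonzero) (auto simp: n_def)
  then show "poisson (d k) (n, n * n) \<noteq> e k"
    by (simp add: poisson_def power2_eq_square algebra_simps)
qed

lemma theta_eq_lie_theta:
  fixes f :: "'k::field_char_0 laurent"
  obtains u w where "theta f = lie (theta u) (theta w)"
proof -
  define h where "h = f - cst (coef f 0)"
  have keys_h: "k \<noteq> 0" if "k \<in> Poly_Mapping.keys h" for k
    using that by (auto simp: h_def in_keys_iff lookup_minus coef_cst)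
  obtain a where a: "\<And>k. k \<in> Poly_Mapping.keys h \<Longrightarrow> poisson k a \<noteq> 0"
    using exists_poisson_avoiding[where d = "\<lambda>k. k" and e = "\<lambda>_. 0", OF finite_keys keys_h] by blast
  define w where "w = mon (- a) * scale_coeffs (\<lambda>k. inverse (of_int (poisson a k))) h"
  have "theta (mon a) w = h"
    unfolding w_def theta_mon_mult_mon_uminus using a
    by (intro scale_coeffs_inverse) (simp add: poisson_antisym[of a])
  then have "theta f = lie (theta (mon a)) (theta w)"
    by (simp add: lie_theta_theta h_def theta_minus_constant_term)
  then show ?thesis
    by (rule that)
qed

lemma bracket_span_Ham: "bracket_span Ham Ham = (Ham :: ('k::field_char_0 laurent \<Rightarrow> 'k laurent) set)"
proof
  show "bracket_span Ham Ham \<subseteq> (Ham :: ('k laurent \<Rightarrow> 'k laurent) set)"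
    unfolding bracket_span_def using vsubspace_Ham lie_subalgebra_Ham
    by (intro Inter_lower) (auto simp: lie_subalgebra_def lie_theta_theta)
  show "(Ham :: ('k laurent \<Rightarrow> 'k laurent) set) \<subseteq> bracket_span Ham Ham"
  proof
    fix xi :: "'k laurent \<Rightarrow> 'k laurent"
    assume "xi \<in> Ham"
    then obtain u w where "xi = lie (theta u) (theta w)"
      by (metis HamE theta_eq_lie_theta)
    then show "xi \<in> bracket_span Ham Ham"
      unfolding bracket_span_def using theta_in_Ham by blast
  qed
qed

lemma theta_mon_nonzero:
  assumes "a \<noteq> 0"
  shows "theta (mon a) \<noteq> (zerovf :: 'k::field_char_0 laurent \<Rightarrow> 'k laurent)"
proof
  obtain b where b: "poisson a b \<noteq> 0"
    using exists_poisson_avoiding[of "{a}" "\<lambda>k. k" "\<lambda>_. 0"] assms by blast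
  assume "theta (mon a) = (zerovf :: 'k laurent \<Rightarrow> 'k laurent)"
  then have "coef (theta (mon a) (mon b) :: 'k laurent) (a + b) = 0"
    by (simp add: zerovf_def)
  then show False
    using b by (simp add: theta_mon_mon coef_mon)
qed

lemma nbrackets_Ham:
  fixes xi :: "'k::field_char_0 laurent \<Rightarrow> 'k laurent"
  assumes "xi \<in> Ham"
  shows "nbrackets Ham xi = (if xi = zerovf then 0 else 1)"
proof -
  let ?P = "\<lambda>n. \<exists>u v :: nat \<Rightarrow> ('k laurent \<Rightarrow> 'k laurent).
    (\<forall>i<n. u i \<in> Ham \<and> v i \<in> Ham) \<and> xi = (\<lambda>f. \<Sum>i<n. lie (u i) (v i) f)"
  obtain u w where uw: "xi = lie (theta u) (theta w)"
    using assms by (metis HamE theta_eq_lie_theta)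
  have P1: "?P 1"
    by (intro exI[of _ "\<lambda>_. theta u"] exI[of _ "\<lambda>_. theta w"]) (simp add: uw)
  have "nbrackets Ham xi \<le> 1"
    unfolding nbrackets_def by (rule Least_le) (rule P1)
  moreover have "?P (nbrackets Ham xi)"
    unfolding nbrackets_def by (rule LeastI) (rule P1)
  moreover have "?P 0 \<longleftrightarrow> xi = zerovf"
    by (simp add: zerovf_def)
  ultimately show ?thesis
    by (cases "nbrackets Ham xi") (auto simp: nbrackets_def)
qed

lemma bracket_width_Ham: "bracket_width (Ham :: ('k::field_char_0 laurent \<Rightarrow> 'k laurent) set) = 1"
proof -
  have "theta (mon (1, 0)) \<in> (Ham :: ('k laurent \<Rightarrow> 'k laurent) set)"
    "theta (mon (1, 0)) \<noteq> (zerovf :: 'k laurent \<Rightarrow> 'k laurent)"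
    by (simp_all add: theta_mon_nonzero zero_prod_def)
  then have "(SUP xi \<in> (Ham :: ('k laurent \<Rightarrow> 'k laurent) set). enat (nbrackets Ham xi)) = 1"
    by (intro antisym SUP_least SUP_upper2[of "theta (mon (1, 0))"])
      (auto simp: nbrackets_Ham one_enat_def)
  then show ?thesis
    by (simp add: bracket_width_def bracket_span_Ham)
qed

context
  fixes I :: "('k::field_char_0 laurent \<Rightarrow> 'k laurent) set"
  assumes I: "lie_ideal I Ham"
begin

lemma ideal_zerovf: "zerovf \<in> I"
  using I by (simp add: lie_ideal_def vsubspace_def)

lemma ideal_theta_add: "theta p \<in> I \<Longrightarrow> theta q \<in> I \<Longrightarrow> theta (p + q) \<in> I"
  using I by (simp add: lie_ideal_def vsubspace_def theta_add)

lemma ideal_theta_cst_mult: "theta q \<in> I \<Longrightarrow> theta (cst c * q) \<in> I"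
  using I by (simp add: lie_ideal_def vsubspace_def theta_cst_mult)

lemma ideal_theta_cst_mult_cancel:
  assumes "theta (cst c * q) \<in> I" "c \<noteq> 0"
  shows "theta q \<in> I"
  using ideal_theta_cst_mult[OF assms(1), of "inverse c"] assms(2)
  by (simp add: mult.assoc[symmetric] cst_mult_cst cst_1)

lemma ideal_theta_theta: "theta q \<in> I \<Longrightarrow> theta (theta f q) \<in> I"
  using I unfolding lie_ideal_def by (metis lie_theta_theta theta_in_Ham)

lemma ideal_theta_scale_poisson_sq:
  assumes "finite D" "theta q \<in> I"
  shows "theta (scale_coeffs (\<lambda>k. \<Prod>d\<in>D. - (of_int (poisson d k) ^ 2)) q) \<in> I"
  using assms(1)
proof (induct D rule: finite_induct)
  case empty
  have "scale_coeffs (\<lambda>k. 1) q = q"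
    by (rule poly_mapping_eqI) simp
  then show ?case
    using assms(2) by simp
next
  case (insert d D)
  let ?q = "scale_coeffs (\<lambda>k. \<Prod>d\<in>D. - (of_int (poisson d k) ^ 2)) q"
  have "theta (theta (mon (- d)) (theta (mon d) ?q)) \<in> I"
    by (intro ideal_theta_theta insert(3))
  then show ?case
    using insert(1,2) by (simp add: theta_mon_uminus_theta_mon scale_coeffs_scale_coeffs)
qed

text \<open>The operators of \<open>ideal_theta_scale_poisson_sq\<close> kill the coefficients at all \<open>d \<in> D\<close>
  and keep the one at \<open>t\<close> as long as no \<open>d\<close> is parallel to \<open>t\<close>.\<close>
lemma ideal_isolate_monomial:
  assumes g: "theta g \<in> I" and t: "t \<in> Poly_Mapping.keys g"
    and nonparallel: "\<And>k. k \<in> Poly_Mapping.keys g \<Longrightarrow> k \<noteq> t \<Longrightarrow> poisson k t \<noteq> 0"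
  shows "theta (mon t) \<in> I"
proof -
  define D where "D = Poly_Mapping.keys g - {t}"
  define w where "w k = (\<Prod>d\<in>D. - (of_int (poisson d k) ^ 2) :: 'k)" for k
  have "theta (scale_coeffs w g) \<in> I"
    unfolding w_def D_def by (rule ideal_theta_scale_poisson_sq) (simp_all add: g)
  moreover have "scale_coeffs w g = cst (w t * coef g t) * mon t"
  proof (rule poly_mapping_eqI)
    fix k
    have "w k * coef g k = 0" if "k \<noteq> t"
    proof (cases "k \<in> D")
      case True
      then show ?thesis
        by (auto simp: w_def D_def poisson_def intro!: prod_zero bexI[of _ k])
    qed (use that in \<open>simp add: D_def in_keys_iff\<close>)
    then show "coef (scale_coeffs w g) k = coef (cst (w t * coef g t) * mon t) k"
      by (auto simp: coef_mon)
  qed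
  moreover have "w t * coef g t \<noteq> 0"
    using t nonparallel by (simp add: w_def D_def in_keys_iff)
  ultimately show ?thesis
    by (metis ideal_theta_cst_mult_cancel)
qed

text \<open>Bracketing with \<open>\<theta>(x\<^sup>a)\<close> shifts the support of \<open>g\<close> by \<open>a\<close>; for generic \<open>a\<close> no other
  shifted exponent is parallel to \<open>c\<^sub>0 + a\<close>, so \<open>ideal_isolate_monomial\<close> applies.\<close>
lemma ideal_contains_monomial:
  assumes g: "theta g \<in> I" "theta g \<noteq> zerovf"
  obtains t where "t \<noteq> 0" "theta (mon t) \<in> I"
proof -
  obtain c0 where c0: "c0 \<in> Poly_Mapping.keys g" "c0 \<noteq> 0"
  proof (rule ccontr)
    assume "\<not> thesis"
    with that have "g = cst (coef g 0)"
      by (intro poly_mapping_eqI) (auto simp: coef_cst in_keys_iff)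
    then have "theta g = theta (cst (coef g 0))"
      by (rule arg_cong)
    with g(2) show False
      by (simp add: theta_cst)
  qed
  define d where "d k = (if k = c0 then c0 else k - c0)" for k
  define e where "e k = (if k = c0 then 0 else - poisson k c0)" for k
  have "d k \<noteq> 0" for k
    using c0(2) by (simp add: d_def)
  then obtain a where a: "\<And>k. k \<in> Poly_Mapping.keys g \<Longrightarrow> poisson (d k) a \<noteq> e k"
    using exists_poisson_avoiding[where d = d and e = e, OF finite_keys] by blast
  define r where "r = theta (mon a) g"
  define t where "t = c0 + a"
  have coef_r: "coef r k = of_int (poisson a (k - a)) * coef g (k - a)" for k
    unfolding r_def by (rule coef_theta_mon)
  have "poisson a c0 \<noteq> 0"
    using a[OF c0(1)] by (simp add: d_def e_def poisson_def mult.commute)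
  have "theta (mon t) \<in> I"
  proof (rule ideal_isolate_monomial)
    show "theta r \<in> I"
      unfolding r_def by (rule ideal_theta_theta[OF g(1)])
    show "t \<in> Poly_Mapping.keys r"
      using \<open>poisson a c0 \<noteq> 0\<close> c0(1) by (simp add: coef_r t_def in_keys_iff)
    fix k
    assume "k \<in> Poly_Mapping.keys r" "k \<noteq> t"
    then have "k - a \<in> Poly_Mapping.keys g" "k - a \<noteq> c0"
      by (auto simp: coef_r t_def in_keys_iff)
    from a[OF this(1)] this(2) show "poisson k t \<noteq> 0"
      by (simp add: d_def e_def t_def poisson_def algebra_simps)
  qed
  moreover have "t \<noteq> 0"
  proof
    assume "t = 0"
    then have "a = - c0"
      by (simp add: t_def eq_neg_iff_add_eq_0 add.commute)
    with \<open>poisson a c0 \<noteq> 0\<close> show False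
      by (simp add: poisson_def)
  qed
  ultimately show ?thesis
    using that by blast
qed

lemma ideal_monomial_step:
  assumes "theta (mon b) \<in> I" "poisson c b \<noteq> 0"
  shows "theta (mon c) \<in> I"
proof -
  have "theta (cst (of_int (poisson (c - b) b)) * mon c) \<in> I"
    using ideal_theta_theta[OF assms(1), of "mon (c - b)"] by (simp add: theta_mon_mon)
  moreover have "poisson (c - b) b = poisson c b"
    by (simp add: poisson_def algebra_simps)
  ultimately show ?thesis
    using assms(2) by (auto intro: ideal_theta_cst_mult_cancel)
qed

lemma ideal_all_monomials:
  assumes "theta (mon t) \<in> I" "t \<noteq> 0" "s \<noteq> 0"
  shows "theta (mon s) \<in> I"
proof -
  have "finite {s, t}" "\<And>k. k \<in> {s, t} \<Longrightarrow> k \<noteq> 0"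
    using assms(2,3) by auto
  then obtain a where "\<And>k. k \<in> {s, t} \<Longrightarrow> poisson k a \<noteq> 0"
    using exists_poisson_avoiding[where d = "\<lambda>k. k" and e = "\<lambda>_. 0"] by blast
  then have "poisson t a \<noteq> 0" "poisson s a \<noteq> 0"
    by auto
  then have "poisson a t \<noteq> 0" "poisson s a \<noteq> 0"
    by (simp_all add: poisson_antisym[of a t])
  then show ?thesis
    using assms(1) ideal_monomial_step by blast
qed

lemma ideal_eq_Ham:
  assumes "xi \<in> I" "xi \<noteq> zerovf"
  shows "I = Ham"
proof
  show "I \<subseteq> Ham"
    using I by (simp add: lie_ideal_def)
  obtain g where "xi = theta g"
    using assms(1) \<open>I \<subseteq> Ham\<close> by blast
  with assms have "theta g \<in> I" "theta g \<noteq> zerovf"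
    by simp_all
  then obtain t where t: "t \<noteq> 0" "theta (mon t) \<in> I"
    using ideal_contains_monomial by blast
  have "theta h \<in> I" for h
  proof (induct h rule: laurent_induct)
    case zero
    then show ?case
      using ideal_zerovf by (simp add: theta_def zerovf_def)
  next
    case (add k c f)
    have "theta (cst c * mon k) \<in> I"
    proof (cases "k = 0")
      case True
      then show ?thesis
        using ideal_zerovf by (simp add: mon_0 theta_cst)
    next
      case False
      then show ?thesis
        by (intro ideal_theta_cst_mult ideal_all_monomials[OF t(2,1)])
    qed
    then show ?case
      using ideal_theta_add[OF _ add] by (simp add: single_eq_cst_mult_mon)
  qed
  then show "Ham \<subseteq> I"
    by blast
qed

end

lemma simple_lie_Ham: "simple_lie (Ham :: ('k::field_char_0 laurent \<Rightarrow> 'k laurent) set)"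
  unfolding simple_lie_def
proof (intro conjI allI impI)
  show "lie_subalgebra Ham"
    by (rule lie_subalgebra_Ham)
  obtain u w :: "'k laurent" where "theta (mon (1, 0)) = lie (theta u) (theta w)"
    using theta_eq_lie_theta by blast
  moreover have "theta (mon (1, 0)) \<noteq> (zerovf :: 'k laurent \<Rightarrow> 'k laurent)"
    by (simp add: theta_mon_nonzero zero_prod_def)
  ultimately have "lie (theta u) (theta w) \<noteq> zerovf"
    by simp
  then show "\<exists>a\<in>Ham. \<exists>b\<in>Ham. lie a b \<noteq> (zerovf :: 'k laurent \<Rightarrow> 'k laurent)"
    using theta_in_Ham by blast
  fix I :: "('k laurent \<Rightarrow> 'k laurent) set"
  assume I: "lie_ideal I Ham"
  show "I = {zerovf} \<or> I = Ham"
  proof (cases "\<exists>xi\<in>I. xi \<noteq> zerovf")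
    case True
    then obtain xi where "xi \<in> I" "xi \<noteq> zerovf"
      by blast
    then show ?thesis
      using ideal_eq_Ham[OF I] by simp
  next
    case False
    then have "I = {zerovf}"
      using ideal_zerovf[OF I] by auto
    then show ?thesis ..
  qed
qed

theorem proposition4p6:
  shows "lie_generated {D \<in> (Vec :: ('k::{alg_closed_field, field_char_0} laurent \<Rightarrow> 'k laurent) set).
             locally_nilpotent D} = {zerovf}
    \<and> lie_generated {D \<in> (Ham :: ('k laurent \<Rightarrow> 'k laurent) set). locally_nilpotent D} = {zerovf}
    \<and> lie_ideal (Ham :: ('k laurent \<Rightarrow> 'k laurent) set) VP \<and> Ham \<noteq> (VP :: ('k laurent \<Rightarrow> 'k laurent) set)
    \<and> codim_in (Ham :: ('k laurent \<Rightarrow> 'k laurent) set) VP 2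
    \<and> (Eom :: ('k laurent \<Rightarrow> 'k laurent) set) = bracket_span Ham Ham
    \<and> bracket_span Ham Ham = (Ham :: ('k laurent \<Rightarrow> 'k laurent) set)
    \<and> simple_lie (Ham :: ('k laurent \<Rightarrow> 'k laurent) set)
    \<and> bracket_width (Ham :: ('k laurent \<Rightarrow> 'k laurent) set) = 1"
proof -
  have "{D \<in> (Vec :: ('k laurent \<Rightarrow> 'k laurent) set). locally_nilpotent D} \<subseteq> {zerovf}"
    by (auto simp: Vec_def intro: locally_nilpotent_derivation_eq_zerovf)
  moreover have "{D \<in> (Ham :: ('k laurent \<Rightarrow> 'k laurent) set). locally_nilpotent D} \<subseteq> {zerovf}"
    by (auto intro: locally_nilpotent_derivation_eq_zerovf is_derivation_theta)
  ultimately show ?thesis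
    by (simp add: lie_generated_eq_zerovf lie_ideal_Ham_VP Ham_neq_VP codim_Ham_VP Eom_eq_Ham
        bracket_span_Ham simple_lie_Ham bracket_width_Ham)
qed

end
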